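(* Let $\Gamma$ be an abelian group and $A$ a unital $\Gamma$-graded ring. The following are equivalent: (1) $A$ is a graded right Rickart ring; (2) every graded principal right ideal of $A$ (i.e. every right ideal $xA$ with $x$ homogeneous) is a projective right $A$-module; (3) every graded principal right ideal of $A$ is a graded projective right $A$-module. Consequently, if a $\Gamma$-graded ring $A$ is right Rickart (as an ungraded ring), then it is graded right Rickart.
   Context: A $\Gamma$-graded ring is $A=\bigoplus_{\gamma\in\Gamma}A_\gamma$ with additive subgroups $A_\gamma$ and $A_\gamma A_\delta\subseteq A_{\gamma+\delta}$; elements of $\bigcup_\gamma A_\gamma$ are homogeneous. For $X\subseteq A$, $\operatorname{ann}_r(X)=\{a\in A: xa=0 \ \forall x\in X\}$. A ring is right Rickart if $\operatorname{ann}_r(x)$ is generated as a right ideal by an idempotent for every $x\in A$. A $\Gamma$-graded ring $A$ is graded right Rickart if for every homogeneous $x$, $\operatorname{ann}_r(x)$ is generated as a right ideal by a homogeneous idempotent. A graded right module is $M=\bigoplus_\gamma M_\gamma$ with $M_\gamma A_\delta\subseteq M_{\gamma+\delta}$; a graded projective module is one graded isomorphic to a direct summand of a graded free module (a free module with a homogeneous basis, equivalently a direct sum of shifts $A(\gamma)$, where $M(\delta)_\gamma=M_{\delta+\gamma}$). *)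

theory Defs
  imports Main
begin

definition is_hdecomp :: "('g::ab_group_add \<Rightarrow> 'a::ring_1 set) \<Rightarrow> 'a \<Rightarrow> ('g \<Rightarrow> 'a) \<Rightarrow> bool" where
  "is_hdecomp gr a c \<longleftrightarrow> finite {\<gamma>. c \<gamma> \<noteq> 0} \<and> (\<forall>\<gamma>. c \<gamma> \<in> gr \<gamma>)
      \<and> a = (\<Sum>\<gamma>\<in>{\<gamma>. c \<gamma> \<noteq> 0}. c \<gamma>)"

definition graded_ring :: "('g::ab_group_add \<Rightarrow> 'a::ring_1 set) \<Rightarrow> bool" where
  "graded_ring gr \<longleftrightarrow>
     (\<forall>\<gamma>. 0 \<in> gr \<gamma> \<and> (\<forall>x\<in>gr \<gamma>. \<forall>y\<in>gr \<gamma>. x + y \<in> gr \<gamma> \<and> - x \<in> gr \<gamma>))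
   \<and> (\<forall>\<gamma> \<delta>. \<forall>x\<in>gr \<gamma>. \<forall>y\<in>gr \<delta>. x * y \<in> gr (\<gamma> + \<delta>))
   \<and> (\<forall>a. \<exists>!c. is_hdecomp gr a c)"

definition hcomp :: "('g::ab_group_add \<Rightarrow> 'a::ring_1 set) \<Rightarrow> 'a \<Rightarrow> 'g \<Rightarrow> 'a" where
  "hcomp gr a = (THE c. is_hdecomp gr a c)"

definition homog :: "('g::ab_group_add \<Rightarrow> 'a::ring_1 set) \<Rightarrow> 'a set" where
  "homog gr = (\<Union>\<gamma>. gr \<gamma>)"

definition ann_r :: "'a::ring_1 set \<Rightarrow> 'a set" where
  "ann_r X = {a. \<forall>x\<in>X. x * a = 0}"

definition principal_right_ideal :: "'a::ring_1 \<Rightarrow> 'a set" where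
  "principal_right_ideal x = {x * a | a. True}"

definition right_rickart :: "'a::ring_1 itself \<Rightarrow> bool" where
  "right_rickart _ \<longleftrightarrow>
     (\<forall>x::'a. \<exists>e. e * e = e \<and> ann_r {x} = principal_right_ideal e)"

definition graded_right_rickart :: "('g::ab_group_add \<Rightarrow> 'a::ring_1 set) \<Rightarrow> bool" where
  "graded_right_rickart gr \<longleftrightarrow>
     (\<forall>x\<in>homog gr. \<exists>e\<in>homog gr. e * e = e \<and> ann_r {x} = principal_right_ideal e)"

text \<open>The free right module with basis indexed by I: finitely supported functions
I \<Rightarrow> A (zero outside I), with pointwise addition and right action (f a)(i) = f(i) a.\<close>
definition free_rmod :: "'i set \<Rightarrow> ('i \<Rightarrow> 'a::ring_1) set" where
  "free_rmod I = {f. finite {i. f i \<noteq> 0} \<and> (\<forall>i. i \<notin> I \<longrightarrow> f i = 0)}"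

definition rsubmod :: "('i \<Rightarrow> 'a::ring_1) set \<Rightarrow> bool" where
  "rsubmod C \<longleftrightarrow> (\<lambda>_. 0) \<in> C \<and> (\<forall>f\<in>C. \<forall>g\<in>C. (\<lambda>i. f i + g i) \<in> C) \<and> (\<forall>f\<in>C. (\<lambda>i. - f i) \<in> C)
     \<and> (\<forall>f\<in>C. \<forall>a. (\<lambda>i. f i * a) \<in> C)"

definition rlinear_on :: "'a::ring_1 set \<Rightarrow> ('a \<Rightarrow> 'i \<Rightarrow> 'a) \<Rightarrow> bool" where
  "rlinear_on M \<phi> \<longleftrightarrow> (\<forall>m\<in>M. \<forall>n\<in>M. \<phi> (m + n) = (\<lambda>i. \<phi> m i + \<phi> n i))
     \<and> (\<forall>m\<in>M. \<forall>a. \<phi> (m * a) = (\<lambda>i. \<phi> m i * a))"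

text \<open>M is projective: isomorphic (via phi) to a direct summand of a free module
with basis indexed by a subset of the type 'i.\<close>
definition projective_rideal :: "'i itself \<Rightarrow> 'a::ring_1 set \<Rightarrow> bool" where
  "projective_rideal _ M \<longleftrightarrow>
     (\<exists>(I::'i set) (\<phi>::'a \<Rightarrow> 'i \<Rightarrow> 'a) C.
        rlinear_on M \<phi> \<and> inj_on \<phi> M \<and> \<phi> ` M \<subseteq> free_rmod I
        \<and> rsubmod C \<and> C \<subseteq> free_rmod I
        \<and> \<phi> ` M \<inter> C = {\<lambda>_. 0} \<and> {(\<lambda>i. p i + c i) | p c. p \<in> \<phi> ` M \<and> c \<in> C} = free_rmod I)"

text \<open>Graded free module F = direct sum of shifts A(d i), i in I; its degree delta part
consists of the f with f i in A(d i)_delta = A_(d i + delta).\<close>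
definition gfree_deg :: "('g::ab_group_add \<Rightarrow> 'a::ring_1 set) \<Rightarrow> 'i set \<Rightarrow> ('i \<Rightarrow> 'g) \<Rightarrow> 'g \<Rightarrow> ('i \<Rightarrow> 'a) set" where
  "gfree_deg gr I d \<delta> = {f \<in> free_rmod I. \<forall>i. f i \<in> gr (d i + \<delta>)}"

definition graded_rsubmod :: "('g::ab_group_add \<Rightarrow> 'a::ring_1 set) \<Rightarrow> ('i \<Rightarrow> 'g) \<Rightarrow> ('i \<Rightarrow> 'a) set \<Rightarrow> bool" where
  "graded_rsubmod gr d C \<longleftrightarrow> rsubmod C \<and>
     (\<forall>f\<in>C. \<forall>\<delta>. (\<lambda>i. hcomp gr (f i) (d i + \<delta>)) \<in> C)"

text \<open>M (a graded right ideal, with grading M_delta = M \<inter> A_delta) is graded projective: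
graded isomorphic (phi is bijective onto its image and maps degree delta onto degree delta)
to a graded direct summand of a graded free module.\<close>
definition graded_projective_rideal :: "('g::ab_group_add \<Rightarrow> 'a::ring_1 set) \<Rightarrow> 'i itself \<Rightarrow> 'a set \<Rightarrow> bool" where
  "graded_projective_rideal gr _ M \<longleftrightarrow>
     (\<exists>(I::'i set) (d::'i \<Rightarrow> 'g) (\<phi>::'a \<Rightarrow> 'i \<Rightarrow> 'a) C.
        rlinear_on M \<phi> \<and> inj_on \<phi> M \<and> \<phi> ` M \<subseteq> free_rmod I
        \<and> (\<forall>\<delta>. \<phi> ` (M \<inter> gr \<delta>) = \<phi> ` M \<inter> gfree_deg gr I d \<delta>)
        \<and> graded_rsubmod gr d C \<and> C \<subseteq> free_rmod I
        \<and> \<phi> ` M \<inter> C = {\<lambda>_. 0} \<and> {(\<lambda>i. p i + c i) | p c. p \<in> \<phi> ` M \<and> c \<in> C} = free_rmod I)"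

end

theory Submission
  imports Defs
begin

text \<open>
A principal right ideal \<open>xA\<close> is projective exactly when the surjection \<open>A \<rightarrow> xA\<close>,
\<open>a \<mapsto> xa\<close>, splits, i.e. when \<open>ann_r(x) = eA\<close> for an idempotent \<open>e\<close>; then \<open>xA \<cong> (1 - e)A\<close>
and \<open>A = (1 - e)A \<oplus> eA\<close>. For homogeneous \<open>x\<close> the annihilator is a graded right ideal,
so together with \<open>e\<close> it contains the degree-zero component \<open>e\<^sub>0\<close> of \<open>e\<close>, and \<open>e\<^sub>0\<close> is again an
idempotent generator. Hence Rickart idempotents of homogeneous elements can always be taken
homogeneous, and if \<open>x\<close> has degree \<open>\<delta>\<close> the isomorphism \<open>xA \<cong> (1 - e\<^sub>0)A\<close> is graded once
\<open>(1 - e\<^sub>0)A\<close> is viewed inside the shift \<open>A(-\<delta>)\<close>.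
\<close>

lemma ann_r_idempotent_complement:
  fixes x e :: "'a::ring_1"
  assumes idem: "e * e = e" and ann: "ann_r {x} = principal_right_ideal e"
  shows "x * (1 - e) = x" and "x * b = 0 \<Longrightarrow> (1 - e) * b = 0"
proof -
  have "e \<in> ann_r {x}" unfolding ann principal_right_ideal_def by (metis (mono_tags) CollectI mult_1_right)
  then show "x * (1 - e) = x" by (simp add: ann_r_def right_diff_distrib)
  assume "x * b = 0"
  then obtain c where "b = e * c" using ann unfolding ann_r_def principal_right_ideal_def by blast
  then show "(1 - e) * b = 0" using idem by (simp add: left_diff_distrib mult.assoc[symmetric])
qed

lemma ann_r_eq_principal_right_ideal_diff:
  fixes x u :: "'a::ring_1"
  assumes xu: "x * u = x" and ann: "\<And>b. x * b = 0 \<Longrightarrow> u * b = 0"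
  shows "(1 - u) * (1 - u) = 1 - u" and "ann_r {x} = principal_right_ideal (1 - u)"
proof -
  have "x * (u - 1) = 0" using xu by (simp add: right_diff_distrib)
  then have "u * (u - 1) = 0" by (rule ann)
  then show "(1 - u) * (1 - u) = 1 - u" by (simp add: algebra_simps)
  show "ann_r {x} = principal_right_ideal (1 - u)"
  proof (intro set_eqI iffI)
    fix b assume "b \<in> ann_r {x}"
    then have "u * b = 0" by (simp add: ann_r_def ann)
    then have "b = (1 - u) * b" by (simp add: left_diff_distrib)
    then show "b \<in> principal_right_ideal (1 - u)" unfolding principal_right_ideal_def by blast
  next
    fix b assume "b \<in> principal_right_ideal (1 - u)"
    then obtain a where "b = (1 - u) * a" unfolding principal_right_ideal_def by blast
    then have "x * b = (x - x * u) * a" by (simp add: mult.assoc[symmetric] right_diff_distrib)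
    then show "b \<in> ann_r {x}" using xu by (simp add: ann_r_def)
  qed
qed

lemma rsubmod_sum:
  assumes C: "rsubmod C" and "finite S" and "\<And>i. i \<in> S \<Longrightarrow> g i \<in> C"
  shows "(\<lambda>j. \<Sum>i\<in>S. g i j * w i) \<in> C"
  using assms(2,3)
proof (induction S rule: finite_induct)
  case empty
  then show ?case using C unfolding rsubmod_def by simp
next
  case (insert i S)
  have "(\<lambda>j. g i j * w i) \<in> C" and "(\<lambda>j. \<Sum>i\<in>S. g i j * w i) \<in> C"
    using insert C unfolding rsubmod_def by auto
  then have "(\<lambda>j. g i j * w i + (\<Sum>i\<in>S. g i j * w i)) \<in> C"
    using C[unfolded rsubmod_def] by simp
  then show ?case using insert by simp
qed

lemma free_rmod_fun_upd_zero: "(\<lambda>_. 0)(i := y) \<in> free_rmod {i}"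
proof -
  have "{j. ((\<lambda>_. 0)(i := y)) j \<noteq> 0} \<subseteq> {i}" by auto
  then have "finite {j. ((\<lambda>_. 0)(i := y)) j \<noteq> 0}" by (rule finite_subset) simp
  then show ?thesis unfolding free_rmod_def by simp
qed

lemma rsubmod_fun_upd_principal: "rsubmod {(\<lambda>_. 0)(i := e * c) | c. True}"
  unfolding rsubmod_def
proof (intro conjI ballI allI)
  let ?C = "{(\<lambda>_. 0)(i := e * c) | c. True}"
  show "(\<lambda>_. 0) \<in> ?C" by (rule CollectI, rule exI[of _ 0]) auto
  fix f g assume "f \<in> ?C" "g \<in> ?C"
  then obtain c d where "f = (\<lambda>_. 0)(i := e * c)" "g = (\<lambda>_. 0)(i := e * d)" by blast
  then have "(\<lambda>j. f j + g j) = (\<lambda>_. 0)(i := e * (c + d))" by (auto simp: distrib_left)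
  then show "(\<lambda>j. f j + g j) \<in> ?C" by blast
next
  let ?C = "{(\<lambda>_. 0)(i := e * c) | c. True}"
  fix f assume "f \<in> ?C"
  then obtain c where f: "f = (\<lambda>_. 0)(i := e * c)" by blast
  then have "(\<lambda>j. - f j) = (\<lambda>_. 0)(i := e * - c)" by auto
  then show "(\<lambda>j. - f j) \<in> ?C" by blast
  fix a
  have "(\<lambda>j. f j * a) = (\<lambda>_. 0)(i := e * (c * a))" using f by (auto simp: mult.assoc)
  then show "(\<lambda>j. f j * a) \<in> ?C" by blast
qed

text \<open>
When \<open>f = 1 - e\<close> for an idempotent \<open>e\<close> with
\<open>ann_r(x) = eA\<close> the choice of \<open>a\<close> does not matter, since then \<open>x a = x b\<close> iff \<open>f a = f b\<close>.
\<close>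

definition summand_coord :: "'i \<Rightarrow> 'a::ring_1 \<Rightarrow> 'a \<Rightarrow> 'a \<Rightarrow> 'i \<Rightarrow> 'a" where
  "summand_coord i x f m = (\<lambda>_. 0)(i := f * (SOME a. m = x * a))"

lemma mult_eq_iff_complement:
  assumes "e * e = e" and "ann_r {x} = principal_right_ideal e"
  shows "x * a = x * b \<longleftrightarrow> (1 - e) * a = (1 - e) * b"
  by (metis ann_r_idempotent_complement[OF assms] mult.assoc right_diff_distrib right_minus_eq)

lemma summand_coord_mult:
  assumes "e * e = e" and "ann_r {x} = principal_right_ideal e"
  shows "summand_coord i x (1 - e) (x * a) = (\<lambda>_. 0)(i := (1 - e) * a)"
  unfolding summand_coord_def
  using someI[of "\<lambda>a'. x * a = x * a'" a] mult_eq_iff_complement[OF assms] by metis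

lemma principal_right_ideal_direct_summand:
  fixes x e :: "'a::ring_1" and i :: 'i
  assumes idem: "e * e = e" and ann: "ann_r {x} = principal_right_ideal e"
  defines "\<phi> \<equiv> summand_coord i x (1 - e)" and "M \<equiv> principal_right_ideal x"
    and "C \<equiv> {(\<lambda>_. 0)(i := e * c) | c. True}"
  shows "rlinear_on M \<phi>" and "inj_on \<phi> M" and "\<phi> ` M \<subseteq> free_rmod {i}"
    and "C \<subseteq> free_rmod {i}" and "\<phi> ` M \<inter> C = {\<lambda>_. 0}"
    and "{(\<lambda>j. p j + c j) | p c. p \<in> \<phi> ` M \<and> c \<in> C} = free_rmod {i}"
proof -
  define f where "f = 1 - e"
  have \<phi>_mult: "\<phi> (x * a) = (\<lambda>_. 0)(i := f * a)" for a
    unfolding \<phi>_def f_def by (rule summand_coord_mult[OF idem ann])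
  have xM: "x * a \<in> M" for a unfolding M_def principal_right_ideal_def by blast
  have M_cases: "\<exists>a. m = x * a" if "m \<in> M" for m
    using that unfolding M_def principal_right_ideal_def by blast
  have C_cases: "\<exists>c. g = (\<lambda>_. 0)(i := e * c)" if "g \<in> C" for g
    using that unfolding C_def by blast
  show "rlinear_on M \<phi>"
    unfolding rlinear_on_def
  proof (intro conjI ballI allI)
    fix m n assume "m \<in> M" "n \<in> M"
    then obtain a b where ab: "m = x * a" "n = x * b" using M_cases by blast
    then have "m + n = x * (a + b)" by (simp add: distrib_left)
    then have "\<phi> (m + n) = (\<lambda>_. 0)(i := f * a + f * b)"
      using \<phi>_mult[of "a + b"] by (simp add: distrib_left)
    then show "\<phi> (m + n) = (\<lambda>j. \<phi> m j + \<phi> n j)" using ab by (auto simp: \<phi>_mult)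
  next
    fix m c assume "m \<in> M"
    then obtain a where a: "m = x * a" using M_cases by blast
    then have "m * c = x * (a * c)" by (simp add: mult.assoc)
    then show "\<phi> (m * c) = (\<lambda>j. \<phi> m j * c)"
      using a by (auto simp: \<phi>_mult mult.assoc)
  qed
  show "inj_on \<phi> M"
  proof (rule inj_onI)
    fix m n assume "m \<in> M" "n \<in> M" and "\<phi> m = \<phi> n"
    moreover obtain a b where ab: "m = x * a" "n = x * b" using M_cases \<open>m \<in> M\<close> \<open>n \<in> M\<close> by blast
    ultimately have "(\<lambda>_. 0)(i := f * a) = (\<lambda>_. 0)(i := f * b)" by (simp add: \<phi>_mult)
    then have "f * a = f * b" by (metis fun_upd_same)
    then show "m = n" using mult_eq_iff_complement[OF idem ann] ab by (simp add: f_def)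
  qed
  show "\<phi> ` M \<subseteq> free_rmod {i}"
    using M_cases \<phi>_mult free_rmod_fun_upd_zero by (metis image_subsetI)
  show "C \<subseteq> free_rmod {i}" unfolding C_def by (auto simp: free_rmod_fun_upd_zero)
  show "\<phi> ` M \<inter> C = {\<lambda>_. 0}"
  proof (intro set_eqI iffI)
    fix p assume "p \<in> \<phi> ` M \<inter> C"
    then obtain a c where a: "p = \<phi> (x * a)" and "p = (\<lambda>_. 0)(i := e * c)"
      using M_cases C_cases by blast
    then have "f * a = e * c" by (metis \<phi>_mult fun_upd_same)
    then have "f * (f * a) = 0" using idem by (simp add: f_def mult.assoc[symmetric] left_diff_distrib)
    then have "f * a = 0" using idem by (simp add: f_def mult.assoc[symmetric] algebra_simps)
    then show "p \<in> {\<lambda>_. 0}" by (simp add: a \<phi>_mult fun_eq_iff)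
  next
    fix p :: "'i \<Rightarrow> 'a" assume "p \<in> {\<lambda>_. 0}"
    moreover have "(\<lambda>_. 0) = \<phi> (x * 0)" "(\<lambda>_. 0) = (\<lambda>_. 0)(i := e * 0)"
      using \<phi>_mult[of 0] by (simp_all add: fun_eq_iff)
    ultimately show "p \<in> \<phi> ` M \<inter> C" using xM unfolding C_def by blast
  qed
  show "{(\<lambda>j. p j + c j) | p c. p \<in> \<phi> ` M \<and> c \<in> C} = free_rmod {i}"
  proof (intro set_eqI iffI)
    fix g assume "g \<in> {(\<lambda>j. p j + c j) | p c. p \<in> \<phi> ` M \<and> c \<in> C}"
    then obtain a c where "g = (\<lambda>j. \<phi> (x * a) j + ((\<lambda>_. 0)(i := e * c)) j)"
      using M_cases C_cases by blast
    then have "g = (\<lambda>_. 0)(i := f * a + e * c)" by (auto simp: \<phi>_mult)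
    then show "g \<in> free_rmod {i}" using free_rmod_fun_upd_zero by simp
  next
    fix g :: "'i \<Rightarrow> 'a" assume "g \<in> free_rmod {i}"
    then have "g = (\<lambda>j. \<phi> (x * g i) j + ((\<lambda>_. 0)(i := e * g i)) j)"
      unfolding free_rmod_def by (auto simp: \<phi>_mult f_def algebra_simps fun_eq_iff)
    then show "g \<in> {(\<lambda>j. p j + c j) | p c. p \<in> \<phi> ` M \<and> c \<in> C}"
      unfolding C_def using xM by blast
  qed
qed

lemma unit_vector_expansion:
  fixes v :: "'i \<Rightarrow> 'a::ring_1"
  assumes S: "finite S" "{i. v i \<noteq> 0} \<subseteq> S"
    and unit: "\<And>i. i \<in> S \<Longrightarrow> (\<lambda>_. 0)(i := 1) = (\<lambda>j. v j * a i + c i j)"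
  shows "v j * b = v j * ((\<Sum>i\<in>S. a i * v i) * b) + (\<Sum>i\<in>S. c i j * (v i * b))"
proof -
  have "v j * b = (if j \<in> S then v j * b else 0)"
    using S(2) by (metis (mono_tags) mem_Collect_eq mult_zero_left subsetD)
  also have "\<dots> = (\<Sum>i\<in>S. if i = j then v i * b else 0)"
    using S(1) by (simp add: sum.delta')
  also have "\<dots> = (\<Sum>i\<in>S. ((\<lambda>_. 0)(i := 1)) j * (v i * b))"
    by (intro sum.cong) auto
  also have "\<dots> = (\<Sum>i\<in>S. (v j * a i + c i j) * (v i * b))"
    using unit by (intro sum.cong refl) metis
  also have "\<dots> = v j * ((\<Sum>i\<in>S. a i * v i) * b) + (\<Sum>i\<in>S. c i j * (v i * b))"
    by (simp add: distrib_right sum.distrib sum_distrib_left sum_distrib_right mult.assoc)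
  finally show ?thesis .
qed

text \<open>
Dual basis argument: with \<open>v = \<phi> x\<close>, decompose each basis vector as
\<open>\<epsilon>\<^sub>i = \<phi>(x a\<^sub>i) + c\<^sub>i\<close> with \<open>c\<^sub>i \<in> C\<close>; then \<open>u = \<Sum>\<^sub>i a\<^sub>i v\<^sub>i\<close> makes \<open>\<phi>(x b) - \<phi>(x u b)\<close> a
combination of the \<open>c\<^sub>i\<close>, hence zero.
\<close>

lemma projective_principal_right_ideal_splits:
  fixes x :: "'a::ring_1"
  assumes "projective_rideal TYPE('i) (principal_right_ideal x)"
  obtains u where "x * u = x" and "\<And>b. x * b = 0 \<Longrightarrow> u * b = 0"
proof -
  define M where "M = principal_right_ideal x"
  obtain I :: "'i set" and \<phi> C where lin: "rlinear_on M \<phi>" and inj: "inj_on \<phi> M"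
    and img: "\<phi> ` M \<subseteq> free_rmod I" and C: "rsubmod C" and cap: "\<phi> ` M \<inter> C = {\<lambda>_. 0}"
    and span: "{(\<lambda>i. p i + c i) | p c. p \<in> \<phi> ` M \<and> c \<in> C} = free_rmod I"
    using assms unfolding projective_rideal_def M_def[symmetric] by blast
  have xM: "x * a \<in> M" for a unfolding M_def principal_right_ideal_def by blast
  define v where "v = \<phi> x"
  have \<phi>_mult: "\<phi> (x * a) = (\<lambda>j. v j * a)" for a
    using lin xM[of 1] unfolding rlinear_on_def v_def by (metis mult_1_right)
  have "\<exists>a c. (\<lambda>_. 0)(i := 1) = (\<lambda>j. v j * a + c j) \<and> c \<in> C" if "i \<in> I" for i
  proof -
    have "(\<lambda>_. 0)(i := 1) \<in> free_rmod I"
      using free_rmod_fun_upd_zero[of i 1] that unfolding free_rmod_def by auto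
    then obtain p c where "(\<lambda>_. 0)(i := 1) = (\<lambda>j. p j + c j)" "p \<in> \<phi> ` M" "c \<in> C"
      using span by blast
    moreover obtain a where "p = \<phi> (x * a)" using \<open>p \<in> \<phi> ` M\<close>
      unfolding M_def principal_right_ideal_def by blast
    ultimately show ?thesis using \<phi>_mult by auto
  qed
  then obtain a c where unit: "\<And>i. i \<in> I \<Longrightarrow> (\<lambda>_. 0)(i := 1) = (\<lambda>j. v j * a i + c i j)"
    and cC: "\<And>i. i \<in> I \<Longrightarrow> c i \<in> C"
    by metis
  define S where "S = {i. v i \<noteq> 0}"
  have S: "finite S" "S \<subseteq> I"
    using img xM[of 1] unfolding free_rmod_def S_def v_def by auto
  define u where "u = (\<Sum>i\<in>S. a i * v i)"
  have coord: "v j * b = v j * (u * b) + (\<Sum>i\<in>S. c i j * (v i * b))" for j b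
    unfolding u_def using S by (intro unit_vector_expansion) (auto simp: S_def unit)
  have xub: "x * b = x * (u * b)" for b
  proof -
    define w where "w = (\<lambda>j. \<Sum>i\<in>S. c i j * (v i * b))"
    have "w \<in> C" unfolding w_def by (rule rsubmod_sum[OF C S(1)]) (use cC S(2) in blast)
    moreover have "w = \<phi> (x * (b - u * b))"
      unfolding \<phi>_mult w_def by (rule ext) (metis coord add_diff_cancel_left' right_diff_distrib)
    ultimately have "w = (\<lambda>_. 0)" using cap xM by blast
    then have "\<phi> (x * (b - u * b)) = \<phi> (x * 0)"
      using \<open>w = \<phi> _\<close> \<phi>_mult[of 0] by simp
    then have "x * (b - u * b) = 0" using inj xM unfolding inj_on_def by (metis mult_zero_right)
    then show ?thesis by (simp add: algebra_simps)
  qed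
  show thesis
  proof
    show "x * u = x" using xub[of 1] by simp
  next
    fix b assume "x * b = 0"
    then have "v j * b = 0" for j using \<phi>_mult[of b] \<phi>_mult[of 0] by (metis mult_zero_right)
    then show "u * b = 0" unfolding u_def by (simp add: sum_distrib_right mult.assoc)
  qed
qed

context
  fixes gr :: "'g::ab_group_add \<Rightarrow> 'a::ring_1 set"
  assumes graded: "graded_ring gr"
begin

lemma zero_in_gr: "0 \<in> gr \<gamma>"
  using graded unfolding graded_ring_def by blast

lemma add_in_gr: "x \<in> gr \<gamma> \<Longrightarrow> y \<in> gr \<gamma> \<Longrightarrow> x + y \<in> gr \<gamma>"
  using graded unfolding graded_ring_def by blast

lemma uminus_in_gr: "x \<in> gr \<gamma> \<Longrightarrow> - x \<in> gr \<gamma>"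
  using graded unfolding graded_ring_def by blast

lemma mult_in_gr: "x \<in> gr \<gamma> \<Longrightarrow> y \<in> gr \<delta> \<Longrightarrow> x * y \<in> gr (\<gamma> + \<delta>)"
  using graded unfolding graded_ring_def by blast

lemma is_hdecomp_hcomp: "is_hdecomp gr a (hcomp gr a)"
  using graded unfolding graded_ring_def hcomp_def by (metis theI')

lemma hcomp_eqI: "is_hdecomp gr a c \<Longrightarrow> hcomp gr a = c"
  using graded unfolding graded_ring_def hcomp_def by (metis the1_equality)

lemma is_hdecompI:
  assumes "finite S" and "\<And>\<gamma>. c \<gamma> \<in> gr \<gamma>" and "\<And>\<gamma>. \<gamma> \<notin> S \<Longrightarrow> c \<gamma> = 0"
    and "a = (\<Sum>\<gamma>\<in>S. c \<gamma>)"
  shows "is_hdecomp gr a c"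
proof -
  have supp: "{\<gamma>. c \<gamma> \<noteq> 0} \<subseteq> S" using assms(3) by blast
  have "(\<Sum>\<gamma>\<in>{\<gamma>. c \<gamma> \<noteq> 0}. c \<gamma>) = (\<Sum>\<gamma>\<in>S. c \<gamma>)"
    by (rule sum.mono_neutral_left[OF assms(1) supp]) auto
  then show ?thesis
    unfolding is_hdecomp_def using assms finite_subset[OF supp] by auto
qed

lemma hcomp_in_gr: "hcomp gr a \<gamma> \<in> gr \<gamma>"
  using is_hdecomp_hcomp unfolding is_hdecomp_def by blast

lemma finite_hcomp_support: "finite {\<gamma>. hcomp gr a \<gamma> \<noteq> 0}"
  using is_hdecomp_hcomp unfolding is_hdecomp_def by blast

lemma sum_hcomp: "(\<Sum>\<gamma>\<in>{\<gamma>. hcomp gr a \<gamma> \<noteq> 0}. hcomp gr a \<gamma>) = a"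
  using is_hdecomp_hcomp unfolding is_hdecomp_def by simp

lemma hcomp_homog: "a \<in> gr \<delta> \<Longrightarrow> hcomp gr a = (\<lambda>\<gamma>. if \<gamma> = \<delta> then a else 0)"
  by (rule hcomp_eqI, rule is_hdecompI[where S = "{\<delta>}"]) (auto simp: zero_in_gr)

lemma hcomp_zero [simp]: "hcomp gr 0 \<gamma> = 0"
  using hcomp_homog[OF zero_in_gr[of 0]] by simp

lemma in_gr_if_hcomp_eq_0:
  assumes "\<And>\<gamma>. \<gamma> \<noteq> \<delta> \<Longrightarrow> hcomp gr a \<gamma> = 0"
  shows "a \<in> gr \<delta>"
proof -
  have supp: "{\<gamma>. hcomp gr a \<gamma> \<noteq> 0} \<subseteq> {\<delta>}" using assms by auto
  have "(\<Sum>\<gamma>\<in>{\<gamma>. hcomp gr a \<gamma> \<noteq> 0}. hcomp gr a \<gamma>) = (\<Sum>\<gamma>\<in>{\<delta>}. hcomp gr a \<gamma>)"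
    by (rule sum.mono_neutral_left[OF _ supp]) auto
  then have "a = hcomp gr a \<delta>" by (simp add: sum_hcomp)
  then show ?thesis by (metis hcomp_in_gr)
qed

lemma hcomp_mult_homog_left:
  assumes x: "x \<in> gr \<delta>"
  shows "hcomp gr (x * a) \<gamma> = x * hcomp gr a (\<gamma> - \<delta>)"
proof -
  let ?T = "{\<gamma>. hcomp gr a \<gamma> \<noteq> 0}"
  have "is_hdecomp gr (x * a) (\<lambda>\<gamma>. x * hcomp gr a (\<gamma> - \<delta>))"
  proof (rule is_hdecompI[where S = "(\<lambda>t. t + \<delta>) ` ?T"])
    show "finite ((\<lambda>t. t + \<delta>) ` ?T)" using finite_hcomp_support by simp
    show "x * hcomp gr a (\<gamma> - \<delta>) \<in> gr \<gamma>" for \<gamma>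
      using mult_in_gr[OF x hcomp_in_gr[of a "\<gamma> - \<delta>"]] by simp
    show "x * hcomp gr a (\<gamma> - \<delta>) = 0" if "\<gamma> \<notin> (\<lambda>t. t + \<delta>) ` ?T" for \<gamma>
      using that by (metis (mono_tags, lifting) diff_add_cancel image_eqI mem_Collect_eq mult_zero_right)
    have "(\<Sum>\<gamma>\<in>(\<lambda>t. t + \<delta>) ` ?T. x * hcomp gr a (\<gamma> - \<delta>)) = x * (\<Sum>t\<in>?T. hcomp gr a t)"
      by (subst sum.reindex) (auto simp: inj_on_def sum_distrib_left)
    then show "x * a = (\<Sum>\<gamma>\<in>(\<lambda>t. t + \<delta>) ` ?T. x * hcomp gr a (\<gamma> - \<delta>))"
      by (simp add: sum_hcomp)
  qed
  then show ?thesis by (simp add: hcomp_eqI)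
qed

lemma hcomp_mult_homog_right:
  assumes x: "x \<in> gr \<delta>"
  shows "hcomp gr (a * x) \<gamma> = hcomp gr a (\<gamma> - \<delta>) * x"
proof -
  let ?T = "{\<gamma>. hcomp gr a \<gamma> \<noteq> 0}"
  have "is_hdecomp gr (a * x) (\<lambda>\<gamma>. hcomp gr a (\<gamma> - \<delta>) * x)"
  proof (rule is_hdecompI[where S = "(\<lambda>t. t + \<delta>) ` ?T"])
    show "finite ((\<lambda>t. t + \<delta>) ` ?T)" using finite_hcomp_support by simp
    show "hcomp gr a (\<gamma> - \<delta>) * x \<in> gr \<gamma>" for \<gamma>
      using mult_in_gr[OF hcomp_in_gr[of a "\<gamma> - \<delta>"] x] by simp
    show "hcomp gr a (\<gamma> - \<delta>) * x = 0" if "\<gamma> \<notin> (\<lambda>t. t + \<delta>) ` ?T" for \<gamma>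
      using that by (metis (mono_tags, lifting) diff_add_cancel image_eqI mem_Collect_eq mult_zero_left)
    have "(\<Sum>\<gamma>\<in>(\<lambda>t. t + \<delta>) ` ?T. hcomp gr a (\<gamma> - \<delta>) * x) = (\<Sum>t\<in>?T. hcomp gr a t) * x"
      by (subst sum.reindex) (auto simp: inj_on_def sum_distrib_right)
    then show "a * x = (\<Sum>\<gamma>\<in>(\<lambda>t. t + \<delta>) ` ?T. hcomp gr a (\<gamma> - \<delta>) * x)"
      by (simp add: sum_hcomp)
  qed
  then show ?thesis by (simp add: hcomp_eqI)
qed

text \<open>The degree-zero component of \<open>1\<close> is a right unit for every homogeneous element, hence for all of \<open>A\<close>.\<close>

lemma one_in_gr_zero: "1 \<in> gr 0"
proof -
  define u where "u = hcomp gr 1 0"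
  have unit: "b * u = b" if "b \<in> gr \<delta>" for b \<delta>
    using hcomp_mult_homog_left[OF that, of 1 \<delta>] hcomp_homog[OF that] by (simp add: u_def)
  let ?T = "{\<gamma>. hcomp gr 1 \<gamma> \<noteq> 0}"
  have "u = (\<Sum>\<gamma>\<in>?T. hcomp gr 1 \<gamma>) * u" by (simp add: sum_hcomp)
  also have "\<dots> = (\<Sum>\<gamma>\<in>?T. hcomp gr 1 \<gamma>)" by (simp add: sum_distrib_right unit[OF hcomp_in_gr])
  also have "\<dots> = 1" by (rule sum_hcomp)
  finally show ?thesis using hcomp_in_gr u_def by metis
qed

lemma hcomp_in_ann_r:
  assumes "x \<in> gr \<delta>" and "b \<in> ann_r {x}"
  shows "hcomp gr b \<gamma> \<in> ann_r {x}"
  using hcomp_mult_homog_left[OF assms(1), of b "\<gamma> + \<delta>"] assms(2) by (simp add: ann_r_def)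

text \<open>
If \<open>eA\<close> is graded, \<open>e\<close> fixes each component \<open>e\<^sub>\<gamma> \<in> eA\<close>; comparing degree-\<open>\<gamma>\<close> components of
\<open>e e\<^sub>\<gamma> = e\<^sub>\<gamma>\<close> gives \<open>e\<^sub>0 e\<^sub>\<gamma> = e\<^sub>\<gamma>\<close>, hence \<open>e\<^sub>0 e = e\<close>.
\<close>

lemma principal_right_ideal_hcomp_zero:
  assumes idem: "e * e = e"
    and graded_ideal: "\<And>b \<gamma>. b \<in> principal_right_ideal e \<Longrightarrow> hcomp gr b \<gamma> \<in> principal_right_ideal e"
  shows "hcomp gr e 0 * hcomp gr e 0 = hcomp gr e 0"
    and "principal_right_ideal (hcomp gr e 0) = principal_right_ideal e"
proof -
  define e0 where "e0 = hcomp gr e 0"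
  have "e \<in> principal_right_ideal e" unfolding principal_right_ideal_def by (metis (mono_tags) CollectI mult_1_right)
  then have "\<exists>c. hcomp gr e \<gamma> = e * c" for \<gamma> using graded_ideal unfolding principal_right_ideal_def by blast
  then have e_fixes: "e * hcomp gr e \<gamma> = hcomp gr e \<gamma>" for \<gamma> by (metis idem mult.assoc)
  have e0_fixes: "e0 * hcomp gr e \<gamma> = hcomp gr e \<gamma>" for \<gamma>
    using hcomp_mult_homog_right[OF hcomp_in_gr[of e \<gamma>], of e \<gamma>] hcomp_homog[OF hcomp_in_gr[of e \<gamma>]]
    by (simp add: e_fixes e0_def)
  then show "hcomp gr e 0 * hcomp gr e 0 = hcomp gr e 0" unfolding e0_def .
  have "e0 * e = e0 * (\<Sum>\<gamma>\<in>{\<gamma>. hcomp gr e \<gamma> \<noteq> 0}. hcomp gr e \<gamma>)" by (simp add: sum_hcomp)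
  also have "\<dots> = (\<Sum>\<gamma>\<in>{\<gamma>. hcomp gr e \<gamma> \<noteq> 0}. e0 * hcomp gr e \<gamma>)" by (rule sum_distrib_left)
  also have "\<dots> = e" by (simp add: e0_fixes sum_hcomp)
  finally have e0e: "e0 * e = e" .
  obtain c where e0c: "e0 = e * c" using \<open>\<exists>c. hcomp gr e 0 = e * c\<close> e0_def by blast
  show "principal_right_ideal e0 = principal_right_ideal e"
    unfolding principal_right_ideal_def
    by (metis (no_types, opaque_lifting) e0e e0c mult.assoc)
qed

lemma ann_r_degree_zero_idempotent:
  assumes "x \<in> homog gr" and "e * e = e" and ann: "ann_r {x} = principal_right_ideal e"
  obtains e0 where "e0 \<in> gr 0" and "e0 * e0 = e0" and "ann_r {x} = principal_right_ideal e0"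
proof
  obtain \<delta> where "x \<in> gr \<delta>" using assms(1) unfolding homog_def by blast
  then have "hcomp gr b \<gamma> \<in> principal_right_ideal e" if "b \<in> principal_right_ideal e" for b \<gamma>
    using hcomp_in_ann_r[OF \<open>x \<in> gr \<delta>\<close>] that unfolding ann by blast
  from principal_right_ideal_hcomp_zero[OF assms(2) this]
  show "hcomp gr e 0 * hcomp gr e 0 = hcomp gr e 0"
    and "ann_r {x} = principal_right_ideal (hcomp gr e 0)"
    using ann by simp_all
qed (rule hcomp_in_gr)

lemma graded_right_rickart_iff:
  "graded_right_rickart gr \<longleftrightarrow>
    (\<forall>x\<in>homog gr. \<exists>e. e * e = e \<and> ann_r {x} = principal_right_ideal e)"
  unfolding graded_right_rickart_def homog_def
  by (metis (no_types, lifting) UNIV_I UN_I ann_r_degree_zero_idempotent homog_def)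

lemma mult_in_gr_iff_complement:
  assumes x: "x \<in> gr \<delta>" and f: "f \<in> gr 0"
    and xf: "x * f = x" and ann: "\<And>b. x * b = 0 \<Longrightarrow> f * b = 0"
  shows "x * a \<in> gr \<delta>' \<longleftrightarrow> f * a \<in> gr (- \<delta> + \<delta>')"
proof
  assume xa: "x * a \<in> gr \<delta>'"
  show "f * a \<in> gr (- \<delta> + \<delta>')"
  proof (rule in_gr_if_hcomp_eq_0)
    fix \<gamma> assume "\<gamma> \<noteq> - \<delta> + \<delta>'"
    then have "\<gamma> + \<delta> \<noteq> \<delta>'" by (metis add.commute add_diff_cancel diff_conv_add_uminus)
    then have "x * hcomp gr a \<gamma> = 0"
      using hcomp_mult_homog_left[OF x, of a "\<gamma> + \<delta>"] hcomp_homog[OF xa] by simp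
    then show "hcomp gr (f * a) \<gamma> = 0"
      using hcomp_mult_homog_left[OF f, of a \<gamma>] ann by simp
  qed
next
  assume "f * a \<in> gr (- \<delta> + \<delta>')"
  then have "x * (f * a) \<in> gr (\<delta> + (- \<delta> + \<delta>'))" by (rule mult_in_gr[OF x])
  then show "x * a \<in> gr \<delta>'" using xf by (simp add: mult.assoc[symmetric])
qed

lemma graded_rsubmod_fun_upd_principal:
  assumes "e \<in> gr 0"
  shows "graded_rsubmod gr d {(\<lambda>_. 0)(i := e * c) | c. True}"
  unfolding graded_rsubmod_def
proof (intro conjI ballI allI rsubmod_fun_upd_principal)
  fix g \<delta> assume "g \<in> {(\<lambda>_. 0)(i := e * c) | c. True}"
  then obtain c where "g = (\<lambda>_. 0)(i := e * c)" by blast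
  then have "(\<lambda>j. hcomp gr (g j) (d j + \<delta>)) = (\<lambda>_. 0)(i := e * hcomp gr c (d i + \<delta>))"
    using hcomp_mult_homog_left[OF assms] by auto
  then show "(\<lambda>j. hcomp gr (g j) (d j + \<delta>)) \<in> {(\<lambda>_. 0)(i := e * c) | c. True}" by blast
qed

lemma graded_projective_principal_right_ideal:
  assumes x: "x \<in> gr \<delta>" and e: "e \<in> gr 0" and idem: "e * e = e"
    and ann: "ann_r {x} = principal_right_ideal e"
  shows "graded_projective_rideal gr TYPE('i) (principal_right_ideal x)"
proof -
  define i :: 'i where "i = undefined"
  define \<phi> where "\<phi> = summand_coord i x (1 - e)"
  define M where "M = principal_right_ideal x"
  define C where "C = {(\<lambda>_. 0)(i := e * c) | c. True}"
  define d :: "'i \<Rightarrow> 'g" where "d = (\<lambda>_. - \<delta>)"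
  have "1 - e \<in> gr 0" using add_in_gr[OF one_in_gr_zero uminus_in_gr[OF e]] by simp
  note degree_iff = mult_in_gr_iff_complement[OF x this ann_r_idempotent_complement[OF idem ann]]
  have "\<phi> (x * a) \<in> gfree_deg gr {i} d \<delta>' \<longleftrightarrow> x * a \<in> gr \<delta>'" for a \<delta>'
    using degree_iff[of a \<delta>'] free_rmod_fun_upd_zero zero_in_gr
    by (auto simp: gfree_deg_def \<phi>_def summand_coord_mult[OF idem ann] d_def)
  then have degree: "\<phi> ` (M \<inter> gr \<delta>') = \<phi> ` M \<inter> gfree_deg gr {i} d \<delta>'" for \<delta>'
    unfolding M_def principal_right_ideal_def by blast
  have "graded_rsubmod gr d C" unfolding C_def by (rule graded_rsubmod_fun_upd_principal[OF e])
  with degree principal_right_ideal_direct_summand[OF idem ann, of i, folded \<phi>_def M_def C_def]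
  show ?thesis unfolding graded_projective_rideal_def M_def[symmetric] by blast
qed

lemma graded_right_rickart_if_projective:
  assumes "\<forall>x\<in>homog gr. projective_rideal TYPE('i) (principal_right_ideal x)"
  shows "graded_right_rickart gr"
  unfolding graded_right_rickart_iff
proof
  fix x assume "x \<in> homog gr"
  then obtain u where "x * u = x" and "\<And>b. x * b = 0 \<Longrightarrow> u * b = 0"
    using assms projective_principal_right_ideal_splits by blast
  from ann_r_eq_principal_right_ideal_diff[OF this]
  show "\<exists>e. e * e = e \<and> ann_r {x} = principal_right_ideal e" by blast
qed

lemma graded_projective_if_graded_right_rickart:
  assumes "graded_right_rickart gr" and "x \<in> homog gr"
  shows "graded_projective_rideal gr TYPE('i) (principal_right_ideal x)"
proof -
  obtain \<delta> where x: "x \<in> gr \<delta>" using assms(2) unfolding homog_def by blast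
  obtain e where "e * e = e" and "ann_r {x} = principal_right_ideal e"
    using assms unfolding graded_right_rickart_def by blast
  then obtain e0 where "e0 \<in> gr 0" "e0 * e0 = e0" "ann_r {x} = principal_right_ideal e0"
    using ann_r_degree_zero_idempotent assms(2) by blast
  then show ?thesis by (rule graded_projective_principal_right_ideal[OF x])
qed

end

lemma graded_projective_rideal_imp_projective_rideal:
  "graded_projective_rideal gr TYPE('i) M \<Longrightarrow> projective_rideal TYPE('i) M"
  unfolding graded_projective_rideal_def projective_rideal_def graded_rsubmod_def by blast

theorem mainTheorem1:
  fixes gr :: "'g::ab_group_add \<Rightarrow> 'a::ring_1 set"
  assumes "graded_ring gr"
  shows "(graded_right_rickart gr \<longleftrightarrow>
            (\<forall>x\<in>homog gr. projective_rideal TYPE('i) (principal_right_ideal x)))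
       \<and> (graded_right_rickart gr \<longleftrightarrow>
            (\<forall>x\<in>homog gr. graded_projective_rideal gr TYPE('j) (principal_right_ideal x)))
       \<and> (right_rickart TYPE('a) \<longrightarrow> graded_right_rickart gr)"
proof (intro conjI iffI impI ballI)
  fix x assume "graded_right_rickart gr" and "x \<in> homog gr"
  then show "graded_projective_rideal gr TYPE('j) (principal_right_ideal x)"
    and "projective_rideal TYPE('i) (principal_right_ideal x)"
    using graded_projective_if_graded_right_rickart[OF assms]
      graded_projective_rideal_imp_projective_rideal by blast+
next
  assume "\<forall>x\<in>homog gr. projective_rideal TYPE('i) (principal_right_ideal x)"
  then show "graded_right_rickart gr" by (rule graded_right_rickart_if_projective[OF assms])
next
  assume "\<forall>x\<in>homog gr. graded_projective_rideal gr TYPE('j) (principal_right_ideal x)"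
  then show "graded_right_rickart gr"
    using graded_right_rickart_if_projective[OF assms]
      graded_projective_rideal_imp_projective_rideal by blast
next
  assume "right_rickart TYPE('a)"
  then show "graded_right_rickart gr"
    unfolding graded_right_rickart_iff[OF assms] right_rickart_def by blast
qed

end
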